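(* Let $k\geq2$ and let $L=(l_1,\dots,l_k)$ be generic and reduced positive integers with sum $n$, and fix a vertex $v_0\in\mathbb{Z}_n$ of $T=Tonn^{n,k}(L)$. For nonnegative integers $p_1,\dots,p_k$ with $p_1l_1+\dots+p_kl_k\equiv0\pmod n$, let $E_1^{p_1}\cdots E_k^{p_k}$ denote the closed edge-path based at $v_0$ which makes $p_1$ steps of type 1, then $p_2$ steps of type 2, ..., then $p_k$ steps of type $k$. Then (i) every closed edge-path based at $v_0$ is homotopic rel $v_0$ to such a path, so every class of $H_1(T;\mathbb{Z})$ is represented by one; and (ii) two such paths $E_1^{p_1}\cdots E_k^{p_k}$ and $E_1^{p'_1}\cdots E_k^{p'_k}$ are homologous if and only if $(p_1,\dots,p_k)-(p'_1,\dots,p'_k)\in\mathbb{Z}\,(1,1,\dots,1)$.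
   Context: $L$ is generic if for all $I,J\subseteq[k]$, $\sum_{i\in I}l_i=\sum_{j\in J}l_j$ implies $I=J$; reduced if $\gcd(l_1,\dots,l_k)=1$. The generalized tonnetz $Tonn^{n,k}(L)$ is the simplicial complex on vertex set $\mathbb{Z}_n$ whose maximal simplices are $\Delta(x;\sigma)=\{x,\,x+l_{\sigma(1)},\dots,x+l_{\sigma(1)}+\dots+l_{\sigma(k-1)}\}$ for $x\in\mathbb{Z}_n$, $\sigma\in S_k$. A step of type $i$ from a vertex $y$ is the oriented 1-simplex from $y$ to $y+l_i$. *)

theory Defs
  imports "HOL-Combinatorics.Permutations"
begin

text \<open>Conventions: the type indices 1..k of the paper are 0..k-1 here; the list
L has entries L!0,...,L!(k-1); vertices of Z_n are represented by 0..n-1 with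
addition mod n.\<close>

definition generic :: "nat list \<Rightarrow> bool" where
  "generic L \<longleftrightarrow> (\<forall>I J. I \<subseteq> {0..<length L} \<longrightarrow> J \<subseteq> {0..<length L} \<longrightarrow>
      (\<Sum>i\<in>I. L!i) = (\<Sum>j\<in>J. L!j) \<longrightarrow> I = J)"

definition reduced :: "nat list \<Rightarrow> bool" where
  "reduced L \<longleftrightarrow> Gcd (set L) = 1"

definition Delta :: "nat \<Rightarrow> nat list \<Rightarrow> nat \<Rightarrow> (nat \<Rightarrow> nat) \<Rightarrow> nat set" where
  "Delta n L x \<sigma> = {(x + (\<Sum>j<m. L!(\<sigma> j))) mod n | m. m < length L}"

definition tonnetz :: "nat \<Rightarrow> nat list \<Rightarrow> nat set set" where
  "tonnetz n L = {S. S \<noteq> {} \<and> (\<exists>x<n. \<exists>\<sigma>. \<sigma> permutes {0..<length L} \<and> S \<subseteq> Delta n L x \<sigma>)}"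

definition edge_path :: "nat set set \<Rightarrow> nat list \<Rightarrow> bool" where
  "edge_path T p \<longleftrightarrow> p \<noteq> [] \<and> (\<forall>i<length p. {p!i} \<in> T) \<and>
      (\<forall>i. i + 1 < length p \<longrightarrow> {p!i, p!(i+1)} \<in> T)"

definition closed_edge_path :: "nat set set \<Rightarrow> nat \<Rightarrow> nat list \<Rightarrow> bool" where
  "closed_edge_path T v p \<longleftrightarrow> edge_path T p \<and> hd p = v \<and> last p = v"

text \<open>Elementary edge-path moves (combinatorial homotopy rel endpoints):
 u v w ~ u w whenever {u,v,w} is a simplex, and u u ~ u.\<close>
definition elem_move :: "nat set set \<Rightarrow> nat list \<Rightarrow> nat list \<Rightarrow> bool" where
  "elem_move T p q \<longleftrightarrow>
     (\<exists>xs ys u v w. p = xs @ [u, v, w] @ ys \<and> q = xs @ [u, w] @ ys \<and> {u, v, w} \<in> T) \<or>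
     (\<exists>xs ys u. p = xs @ [u, u] @ ys \<and> q = xs @ [u] @ ys)"

definition edge_homotopic :: "nat set set \<Rightarrow> nat list \<Rightarrow> nat list \<Rightarrow> bool" where
  "edge_homotopic T p q \<longleftrightarrow> edge_path T p \<and> edge_path T q \<and>
     (\<lambda>a b. elem_move T a b \<or> elem_move T b a)\<^sup>*\<^sup>* p q"

text \<open>Simplicial homology via the ordered chain complex with integer coefficients.
 1-chains: functions on ordered pairs supported on pairs spanning a simplex;
 2-chains: functions on ordered triples supported on triples spanning a simplex.
 The boundary of (a,b,c) is (b,c) - (a,c) + (a,b); the boundary of (a,b) is b - a.\<close>
definition chain1 :: "nat set set \<Rightarrow> (nat \<times> nat \<Rightarrow> int) \<Rightarrow> bool" where
  "chain1 T z \<longleftrightarrow> (\<forall>a b. z (a, b) \<noteq> 0 \<longrightarrow> {a, b} \<in> T)"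

definition chain2 :: "nat set set \<Rightarrow> (nat \<times> nat \<times> nat \<Rightarrow> int) \<Rightarrow> bool" where
  "chain2 T c \<longleftrightarrow> (\<forall>a b d. c (a, b, d) \<noteq> 0 \<longrightarrow> {a, b, d} \<in> T)"

definition bd1 :: "nat \<Rightarrow> (nat \<times> nat \<Rightarrow> int) \<Rightarrow> nat \<Rightarrow> int" where
  "bd1 n z v = (\<Sum>x<n. z (x, v) - z (v, x))"

definition bd2 :: "nat \<Rightarrow> (nat \<times> nat \<times> nat \<Rightarrow> int) \<Rightarrow> nat \<times> nat \<Rightarrow> int" where
  "bd2 n c = (\<lambda>(a, b). \<Sum>x<n. c (x, a, b) - c (a, x, b) + c (a, b, x))"

definition cycle1 :: "nat \<Rightarrow> nat set set \<Rightarrow> (nat \<times> nat \<Rightarrow> int) \<Rightarrow> bool" where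
  "cycle1 n T z \<longleftrightarrow> chain1 T z \<and> (\<forall>v. bd1 n z v = 0)"

definition homologous :: "nat \<Rightarrow> nat set set \<Rightarrow> (nat \<times> nat \<Rightarrow> int) \<Rightarrow> (nat \<times> nat \<Rightarrow> int) \<Rightarrow> bool" where
  "homologous n T z z' \<longleftrightarrow> (\<exists>c. chain2 T c \<and> (\<forall>e. z e - z' e = bd2 n c e))"

definition path_chain :: "nat list \<Rightarrow> nat \<times> nat \<Rightarrow> int" where
  "path_chain p = (\<lambda>(a, b). int (card {i. i + 1 < length p \<and> p!i = a \<and> p!(i+1) = b}))"

fun walk :: "nat \<Rightarrow> nat list \<Rightarrow> nat \<Rightarrow> nat list \<Rightarrow> nat list" where
  "walk n L v [] = [v]"
| "walk n L v (i # is) = v # walk n L ((v + L!i) mod n) is"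

definition E_path :: "nat \<Rightarrow> nat list \<Rightarrow> nat \<Rightarrow> nat list \<Rightarrow> nat list" where
  "E_path n L v ps = walk n L v (concat (map (\<lambda>i. replicate (ps!i) i) [0..<length L]))"

definition admissible :: "nat \<Rightarrow> nat list \<Rightarrow> nat list \<Rightarrow> bool" where
  "admissible n L ps \<longleftrightarrow> length ps = length L \<and> (\<Sum>i<length L. ps!i * L!i) mod n = 0"

end

theory Submission
  imports Defs
begin

text \<open>
  Every edge of the tonnetz lies in a maximal simplex \<open>\<Delta>(x; \<sigma>)\<close>, inside which it can be pushed
  onto a walk of steps; two consecutive steps of different types \<open>i, j\<close> span the triangle
  \<open>{v, v + l_i, v + l_i + l_j}\<close>, so they may be swapped, and sorting a closed walk turns it
  into some \<open>E(p) = E_1^p_1 \<dots> E_k^p_k\<close>. Concatenation gives \<open>E(p) + E(q) \<sim> E(p + q)\<close>, and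
  \<open>E(N, \<dots>, N)\<close> is a sequence of full rounds, each contractible inside one simplex; hence the
  classes of the \<open>E(p)\<close> form a subgroup. A 1-cycle is the sum over its edges \<open>(a, b)\<close> of the
  loops "walk from \<open>v_0\<close> to \<open>a\<close>, edge, walk from \<open>b\<close> back to \<open>v_0\<close>", because the approach walks
  cancel (walks between any two vertices exist since \<open>gcd L = 1\<close>); this gives (ii). Conversely,
  by genericity an edge \<open>a \<rightarrow> b\<close> determines the set \<open>I\<close> of step types with \<open>\<Sum>_I l \<equiv> b - a\<close>
  up to exchanging \<open>\<emptyset>\<close> and \<open>[k]\<close>, so \<open>[i \<in> I] - [1 \<in> I]\<close> is a well-defined 1-cocycle. It takes
  the value \<open>p_i - p_1\<close> on \<open>E(p)\<close>, so homologous \<open>E(p)\<close> differ by a multiple of \<open>(1, \<dots>, 1)\<close>.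
\<close>

section \<open>Combinatorial homotopy of edge paths\<close>

abbreviation edge_equiv :: "nat set set \<Rightarrow> nat list \<Rightarrow> nat list \<Rightarrow> bool" where
  "edge_equiv T \<equiv> (\<lambda>p q. elem_move T p q \<or> elem_move T q p)\<^sup>*\<^sup>*"

lemma edge_equiv_sym: "edge_equiv T p q \<Longrightarrow> edge_equiv T q p"
  by (induction rule: rtranclp_induct) (auto intro: converse_rtranclp_into_rtranclp)

lemma elem_move_append: "elem_move T p q \<Longrightarrow> elem_move T (xs @ p @ ys) (xs @ q @ ys)"
  unfolding elem_move_def
proof (elim disjE exE conjE)
  fix as bs u v w
  assume "p = as @ [u, v, w] @ bs" "q = as @ [u, w] @ bs" "{u, v, w} \<in> T"
  then show "(\<exists>as bs u v w. xs @ p @ ys = as @ [u, v, w] @ bs \<and> xs @ q @ ys = as @ [u, w] @ bs \<and> {u, v, w} \<in> T) \<or>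
      (\<exists>as bs u. xs @ p @ ys = as @ [u, u] @ bs \<and> xs @ q @ ys = as @ [u] @ bs)"
    by (intro disjI1 exI[of _ "xs @ as"] exI[of _ "bs @ ys"]) auto
next
  fix as bs u
  assume "p = as @ [u, u] @ bs" "q = as @ [u] @ bs"
  then show "(\<exists>as bs u v w. xs @ p @ ys = as @ [u, v, w] @ bs \<and> xs @ q @ ys = as @ [u, w] @ bs \<and> {u, v, w} \<in> T) \<or>
      (\<exists>as bs u. xs @ p @ ys = as @ [u, u] @ bs \<and> xs @ q @ ys = as @ [u] @ bs)"
    by (intro disjI2 exI[of _ "xs @ as"] exI[of _ "bs @ ys"]) auto
qed

lemma edge_equiv_append: "edge_equiv T p q \<Longrightarrow> edge_equiv T (xs @ p @ ys) (xs @ q @ ys)"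
  by (induction rule: rtranclp_induct) (auto intro: rtranclp.rtrancl_into_rtrancl elem_move_append)

lemma edge_equiv_Cons: "edge_equiv T p q \<Longrightarrow> edge_equiv T (x # p) (x # q)"
  using edge_equiv_append[of T p q "[x]" "[]"] by simp

lemma edge_equiv_append_right: "edge_equiv T p q \<Longrightarrow> edge_equiv T (p @ ys) (q @ ys)"
  using edge_equiv_append[of T p q "[]" ys] by simp

lemma elem_move_ends: "elem_move T p q \<Longrightarrow> p \<noteq> [] \<and> hd p = hd q \<and> last p = last q"
  unfolding elem_move_def by (auto simp: last_append hd_append)

lemma edge_equiv_ends: "edge_equiv T p q \<Longrightarrow> p \<noteq> [] \<Longrightarrow> hd p = hd q \<and> last p = last q"
  by (induction rule: rtranclp_induct) (use elem_move_ends in metis)+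

lemma edge_equiv_contract_simplex:
  assumes closed: "\<And>A. A \<subseteq> S \<Longrightarrow> A \<noteq> {} \<Longrightarrow> A \<in> T"
    and xs: "set xs \<subseteq> S" "2 \<le> length xs"
  shows "edge_equiv T xs [hd xs, last xs]"
proof -
  obtain u ys w where u: "xs = u # ys @ [w]"
    using xs(2) by (metis One_nat_def Suc_1 Suc_le_length_iff append_butlast_last_id le_SucE list.simps(3))
  have "set (u # ys @ [w]) \<subseteq> S \<Longrightarrow> edge_equiv T (u # ys @ [w]) [u, w]"
  proof (induction ys)
    case (Cons y ys)
    obtain r rest where r: "ys @ [w] = r # rest" by (cases "ys @ [w]") auto
    have "{u, y, r} \<in> T" using Cons.prems r closed[of "{u, y, r}"] by auto
    then have "elem_move T ([] @ [u, y, r] @ rest) ([] @ [u, r] @ rest)"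
      unfolding elem_move_def by blast
    then have "edge_equiv T (u # (y # ys) @ [w]) (u # ys @ [w])" using r by auto
    with Cons show ?case by (auto elim: rtranclp_trans)
  qed simp
  then show ?thesis using u xs(1) by simp
qed

lemma edge_path_Cons_Cons:
  "edge_path T (u # w # p) \<longleftrightarrow> {u} \<in> T \<and> {u, w} \<in> T \<and> edge_path T (w # p)"
  unfolding edge_path_def
  by (auto simp: All_less_Suc2 nth_Cons' split: if_splits)

section \<open>Chains and homology\<close>

lemma path_chain_eq_count_zip: "path_chain p e = int (count_list (zip p (tl p)) e)"
proof (cases e)
  case (Pair a b)
  have "count_list (zip p (tl p)) (a, b) = card {i. i < length (zip p (tl p)) \<and> (a, b) = zip p (tl p) ! i}"
    by (simp add: count_list_eq_length_filter length_filter_conv_card)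
  also have "{i. i < length (zip p (tl p)) \<and> (a, b) = zip p (tl p) ! i} = {i. i + 1 < length p \<and> p!i = a \<and> p!(i+1) = b}"
    by (auto simp: nth_tl)
  finally show ?thesis by (simp add: path_chain_def Pair)
qed

lemma path_chain_singleton [simp]: "path_chain [a] = (\<lambda>e. 0)"
  by (simp add: fun_eq_iff path_chain_eq_count_zip)

lemma path_chain_Cons_Cons:
  "path_chain (a # b # p) e = (if e = (a, b) then 1 else 0) + path_chain (b # p) e"
  by (simp add: path_chain_eq_count_zip)

lemma path_chain_append: "path_chain (p @ v # q) e = path_chain (p @ [v]) e + path_chain (v # q) e"
proof (induction p)
  case (Cons a p) then show ?case by (cases p) (auto simp: path_chain_Cons_Cons)
qed simp

lemma bd2_add: "bd2 n (\<lambda>t. c t + c' t) e = bd2 n c e + bd2 n c' e"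
  by (cases e) (simp add: bd2_def sum.distrib[symmetric] algebra_simps)

lemma bd2_scale: "bd2 n (\<lambda>t. m * c t) e = m * bd2 n c e"
  by (cases e) (simp add: bd2_def sum_distrib_left algebra_simps)

lemma homologous_refl: "homologous n T z z"
  unfolding homologous_def by (rule exI[of _ "\<lambda>t. 0"]) (simp add: chain2_def bd2_def)

lemma homologous_add:
  assumes "homologous n T z z'" and "homologous n T w w'"
  shows "homologous n T (\<lambda>e. z e + w e) (\<lambda>e. z' e + w' e)"
proof -
  obtain c d where c: "chain2 T c" "\<forall>e. z e - z' e = bd2 n c e"
    and d: "chain2 T d" "\<forall>e. w e - w' e = bd2 n d e"
    using assms unfolding homologous_def by blast
  have "chain2 T (\<lambda>t. c t + d t)"
    using c(1) d(1) unfolding chain2_def by (metis add.right_neutral add_0)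
  moreover have "z e + w e - (z' e + w' e) = bd2 n (\<lambda>t. c t + d t) e" for e
    using c(2)[rule_format, of e] d(2)[rule_format, of e] bd2_add[of n c d e] by linarith
  ultimately show ?thesis unfolding homologous_def by blast
qed

lemma homologous_scale:
  assumes "homologous n T z z'"
  shows "homologous n T (\<lambda>e. m * z e) (\<lambda>e. m * z' e)"
proof -
  obtain c where c: "chain2 T c" "\<forall>e. z e - z' e = bd2 n c e"
    using assms unfolding homologous_def by blast
  have "chain2 T (\<lambda>t. m * c t)" using c(1) unfolding chain2_def by simp
  moreover have "m * z e - m * z' e = bd2 n (\<lambda>t. m * c t) e" for e
    using c(2)[rule_format, of e] bd2_scale[of n m c e] by (simp add: right_diff_distrib[symmetric])
  ultimately show ?thesis unfolding homologous_def by blast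
qed

lemma homologous_sym: "homologous n T z z' \<Longrightarrow> homologous n T z' z"
  using homologous_scale[of n T z z' "-1"] unfolding homologous_def by auto

lemma homologous_trans [trans]:
  assumes "homologous n T z z'" and "homologous n T z' z''"
  shows "homologous n T z z''"
  using homologous_add[OF assms] unfolding homologous_def by auto

lemma sum_pairs_indicator:
  "(\<Sum>a<n. \<Sum>b<n. if (a, b) = e then g a b else 0) =
    (if fst e < n \<and> snd e < (n::nat) then g (fst e) (snd e) else (0::'a::comm_monoid_add))"
proof (cases e)
  case (Pair c d)
  have "(\<Sum>b<n. if (a, b) = (c, d) then g a b else 0) = (if a = c \<and> d < n then g c d else 0)" for a
    by (cases "a = c") simp_all
  then show ?thesis using Pair by (cases "d < n") simp_all
qed

lemma bd2_indicator:
  assumes "u < n" "v < n" "w < n"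
  shows "bd2 n (\<lambda>t. if t = (u, v, w) then 1 else 0) e =
    (if e = (v, w) then 1 else 0) - (if e = (u, w) then 1 else 0) + (if e = (u, v) then 1 else 0)"
proof (cases e)
  case (Pair a b)
  have "bd2 n (\<lambda>t. if t = (u, v, w) then 1 else 0) (a, b) =
     (\<Sum>x<n. if x = u then (if (a, b) = (v, w) then 1 else 0) else 0)
   - (\<Sum>x<n. if x = v then (if (a, b) = (u, w) then 1 else 0) else 0)
   + (\<Sum>x<n. if x = w then (if (a, b) = (u, v) then 1 else 0) else 0)"
    unfolding bd2_def prod.case sum_subtractf[symmetric] sum.distrib[symmetric] by (intro sum.cong) auto
  then show ?thesis using Pair assms by simp
qed

lemma elem_move_homologous:
  assumes verts: "\<Union>T \<subseteq> {..<n}" and singletons: "\<forall>x<n. {x} \<in> T"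
    and move: "elem_move T p q" and p: "set p \<subseteq> {..<n}"
  shows "homologous n T (path_chain p) (path_chain q) \<and> set q \<subseteq> {..<n}"
  using move unfolding elem_move_def
proof (elim disjE exE conjE)
  fix xs ys u v w
  assume pq: "p = xs @ [u, v, w] @ ys" "q = xs @ [u, w] @ ys" and uvw: "{u, v, w} \<in> T"
  have "u < n" "v < n" "w < n" using verts uvw by auto
  then have "path_chain p e - path_chain q e = bd2 n (\<lambda>t. if t = (u, v, w) then 1 else 0) e" for e
    using pq path_chain_append[of xs u "v # w # ys"] path_chain_append[of xs u "w # ys"]
    by (simp add: path_chain_Cons_Cons bd2_indicator)
  moreover have "chain2 T (\<lambda>t. if t = (u, v, w) then 1 else 0)" using uvw by (simp add: chain2_def)
  ultimately show ?thesis using p pq unfolding homologous_def by auto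
next
  fix xs ys u
  assume pq: "p = xs @ [u, u] @ ys" "q = xs @ [u] @ ys"
  have u: "u < n" using p pq by auto
  then have "path_chain p e - path_chain q e = bd2 n (\<lambda>t. if t = (u, u, u) then 1 else 0) e" for e
    using pq path_chain_append[of xs u "u # ys"] path_chain_append[of xs u ys]
    by (simp add: path_chain_Cons_Cons bd2_indicator)
  moreover have "chain2 T (\<lambda>t. if t = (u, u, u) then 1 else 0)" using singletons u by (simp add: chain2_def)
  ultimately show ?thesis using p pq unfolding homologous_def by auto
qed

lemma edge_equiv_homologous:
  assumes verts: "\<Union>T \<subseteq> {..<n}" and singletons: "\<forall>x<n. {x} \<in> T"
  shows "edge_equiv T p q \<Longrightarrow> set p \<subseteq> {..<n} \<Longrightarrow> homologous n T (path_chain p) (path_chain q)"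
proof (induction rule: converse_rtranclp_induct)
  case base show ?case by (rule homologous_refl)
next
  case (step p p')
  have "set p' \<subseteq> {..<n} \<and> homologous n T (path_chain p) (path_chain p')"
  proof (cases "elem_move T p p'")
    case True then show ?thesis using elem_move_homologous[OF verts singletons] step.prems by blast
  next
    case False
    then have "elem_move T p' p" using step.hyps by blast
    moreover have "set p' \<subseteq> {..<n}"
      using \<open>elem_move T p' p\<close> step.prems verts unfolding elem_move_def by fastforce
    ultimately show ?thesis using elem_move_homologous[OF verts singletons] homologous_sym by blast
  qed
  then show ?case using step.IH homologous_trans by blast
qed

lemma cycle_sum_potential_diff:
  assumes "\<forall>v. bd1 n z v = 0"
  shows "(\<Sum>a<n. \<Sum>b<n. z (a, b) * (f a - f b)) = (0::int)"
proof -
  have "(\<Sum>a<n. \<Sum>b<n. z (a, b) * (f a - f b)) =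
      (\<Sum>a<n. \<Sum>b<n. z (a, b) * f a) - (\<Sum>a<n. \<Sum>b<n. z (a, b) * f b)"
    by (simp add: right_diff_distrib sum_subtractf)
  also have "(\<Sum>a<n. \<Sum>b<n. z (a, b) * f b) = (\<Sum>b<n. \<Sum>a<n. z (a, b) * f b)"
    by (rule sum.swap)
  also have "(\<Sum>a<n. \<Sum>b<n. z (a, b) * f a) - (\<Sum>b<n. \<Sum>a<n. z (a, b) * f b) =
      - (\<Sum>v<n. f v * bd1 n z v)"
    unfolding bd1_def by (simp add: sum_subtractf right_diff_distrib sum_distrib_left mult.commute)
  finally show ?thesis using assms by simp
qed

lemma chain1_sum_edges:
  assumes verts: "\<Union>T \<subseteq> {..<n}" and z: "chain1 T z"
  shows "z e = (\<Sum>a<n. \<Sum>b<n. z (a, b) * (if e = (a, b) then 1 else 0))"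
proof -
  have "(\<Sum>a<n. \<Sum>b<n. z (a, b) * (if e = (a, b) then 1 else 0)) =
      (\<Sum>a<n. \<Sum>b<n. if (a, b) = e then z (a, b) else 0)"
    by (intro sum.cong) auto
  also have "\<dots> = z e"
    using z verts unfolding sum_pairs_indicator chain1_def by (cases e) auto
  finally show ?thesis ..
qed

lemma cocycle_pairing_boundary:
  assumes c: "chain2 T c" and cocycle: "\<And>a b d. {a, b, d} \<in> T \<Longrightarrow> f b d - f a d + f a b = 0"
  shows "(\<Sum>a<n. \<Sum>b<n. bd2 n c (a, b) * f a b) = (0::int)"
proof -
  have "(\<Sum>a<n. \<Sum>b<n. bd2 n c (a, b) * f a b) =
      (\<Sum>a<n. \<Sum>b<n. \<Sum>x<n. c (x, a, b) * f a b) - (\<Sum>a<n. \<Sum>b<n. \<Sum>x<n. c (a, x, b) * f a b)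
      + (\<Sum>a<n. \<Sum>b<n. \<Sum>x<n. c (a, b, x) * f a b)"
    by (simp add: bd2_def sum_distrib_right sum_subtractf sum.distrib left_diff_distrib distrib_right)
  also have "(\<Sum>a<n. \<Sum>b<n. \<Sum>x<n. c (x, a, b) * f a b) = (\<Sum>x<n. \<Sum>a<n. \<Sum>b<n. c (x, a, b) * f a b)"
  proof -
    have "(\<Sum>a<n. \<Sum>b<n. \<Sum>x<n. c (x, a, b) * f a b) = (\<Sum>a<n. \<Sum>x<n. \<Sum>b<n. c (x, a, b) * f a b)"
      by (intro sum.cong refl sum.swap)
    also have "\<dots> = (\<Sum>x<n. \<Sum>a<n. \<Sum>b<n. c (x, a, b) * f a b)" by (rule sum.swap)
    finally show ?thesis .
  qed
  also have "(\<Sum>a<n. \<Sum>b<n. \<Sum>x<n. c (a, x, b) * f a b) = (\<Sum>a<n. \<Sum>x<n. \<Sum>b<n. c (a, x, b) * f a b)"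
    by (intro sum.cong refl sum.swap)
  also have "(\<Sum>x<n. \<Sum>a<n. \<Sum>b<n. c (x, a, b) * f a b) - (\<Sum>a<n. \<Sum>x<n. \<Sum>b<n. c (a, x, b) * f a b)
      + (\<Sum>a<n. \<Sum>b<n. \<Sum>x<n. c (a, b, x) * f a b) =
      (\<Sum>u<n. \<Sum>v<n. \<Sum>w<n. c (u, v, w) * (f v w - f u w + f u v))"
    by (simp add: sum.distrib sum_subtractf algebra_simps)
  also have "\<dots> = 0"
    using c cocycle unfolding chain2_def by (intro sum.neutral ballI) (metis mult_eq_0_iff)
  finally show ?thesis .
qed

section \<open>Walks\<close>

lemma length_walk [simp]: "length (walk n L v ts) = Suc (length ts)"
  by (induction ts arbitrary: v) auto

lemma walk_not_Nil [simp]: "walk n L v ts \<noteq> []"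
  by (cases ts) auto

lemma hd_walk [simp]: "hd (walk n L v ts) = v"
  by (cases ts) auto

lemma walk_nth:
  assumes "v < n" "m \<le> length ts"
  shows "walk n L v ts ! m = (v + (\<Sum>j<m. L!(ts!j))) mod n"
  using assms
proof (induction ts arbitrary: v m)
  case (Cons t ts)
  show ?case
  proof (cases m)
    case (Suc m')
    have "walk n L v (t # ts) ! m = ((v + L!t) mod n + (\<Sum>j<m'. L!(ts!j))) mod n"
      using Cons Suc by simp
    then show ?thesis
      using Suc by (simp add: sum.lessThan_Suc_shift mod_add_left_eq add.assoc del: sum.lessThan_Suc)
  qed (use Cons in simp)
qed simp

lemma last_walk: "v < n \<Longrightarrow> last (walk n L v ts) = (v + sum_list (map ((!) L) ts)) mod n"
  by (induction ts arbitrary: v) (auto simp: mod_add_left_eq add.assoc)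

lemma walk_append: "walk n L v (as @ bs) = walk n L v as @ tl (walk n L (last (walk n L v as)) bs)"
proof (induction as arbitrary: v)
  case Nil then show ?case by (cases bs) auto
qed simp

lemma last_walk_append: "last (walk n L v (as @ bs)) = last (walk n L (last (walk n L v as)) bs)"
  by (cases bs) (auto simp: walk_append)

lemma path_chain_walk_append:
  "path_chain (walk n L v (as @ bs)) e =
    path_chain (walk n L v as) e + path_chain (walk n L (last (walk n L v as)) bs) e"
proof -
  let ?W = "walk n L v as"
  let ?u = "last ?W"
  obtain R where R: "walk n L ?u bs = ?u # R" by (cases bs) auto
  have W: "butlast ?W @ [?u] = ?W" by simp
  have "walk n L v (as @ bs) = butlast ?W @ ?u # R"
    using R W by (simp add: walk_append)
  then have "path_chain (walk n L v (as @ bs)) e = path_chain (butlast ?W @ [?u]) e + path_chain (?u # R) e"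
    by (simp add: path_chain_append)
  then show ?thesis using R W by simp
qed

lemma set_walk: "v < n \<Longrightarrow> set (walk n L v ts) \<subseteq> {..<n}"
  by (induction ts arbitrary: v) auto

definition block_list :: "nat \<Rightarrow> (nat \<Rightarrow> nat) \<Rightarrow> nat list" where
  "block_list k c = concat (map (\<lambda>i. replicate (c i) i) [0..<k])"

definition step_counts :: "nat \<Rightarrow> nat list \<Rightarrow> nat list" where
  "step_counts k ts = map (count_list ts) [0..<k]"

lemma count_list_block_list: "count_list (block_list k c) i = (if i < k then c i else 0)"
proof -
  have "count_list (replicate m j) i = (if j = i then m else 0)" for m j
    by (induction m) auto
  then show ?thesis unfolding block_list_def by (induction k) auto
qed

lemma set_block_list: "set (block_list k c) \<subseteq> {..<k}"
  unfolding block_list_def by auto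

lemma sorted_block_list: "sorted (block_list k c)"
  unfolding block_list_def by (induction k) (auto simp: sorted_append)

lemma block_list_cong: "(\<And>i. i < k \<Longrightarrow> c i = c' i) \<Longrightarrow> block_list k c = block_list k c'"
  unfolding block_list_def by (rule arg_cong[where f = concat]) auto

lemma sort_eq_block_list: "set ts \<subseteq> {..<k} \<Longrightarrow> sort ts = block_list k (count_list ts)"
  by (rule properties_for_sort)
    (auto simp: multiset_eq_iff count_mset count_list_block_list count_list_0_iff sorted_block_list)

lemma sum_list_map_block_list: "sum_list (map f (block_list k c)) = (\<Sum>i<k. c i * f i)"
  using sum_list_map_eq_sum_count2[OF set_block_list, of k f c] by (simp add: count_list_block_list)

lemma E_path_eq_walk_block_list: "E_path n L v ps = walk n L v (block_list (length L) ((!) ps))"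
  unfolding E_path_def block_list_def by simp

lemma Gcd_set_int_combination: "\<exists>\<beta>::nat \<Rightarrow> int. (\<Sum>i<length xs. \<beta> i * int (xs!i)) = int (Gcd (set xs))"
proof (induction xs)
  case (Cons x xs)
  obtain \<beta> where \<beta>: "(\<Sum>i<length xs. \<beta> i * int (xs!i)) = int (Gcd (set xs))"
    using Cons by blast
  obtain u v where uv: "u * int x + v * int (Gcd (set xs)) = gcd (int x) (int (Gcd (set xs)))"
    using bezout_int by blast
  define \<beta>' where "\<beta>' i = (if i = 0 then u else v * \<beta> (i - 1))" for i
  have "(\<Sum>i<length (x # xs). \<beta>' i * int ((x # xs)!i)) = u * int x + v * (\<Sum>i<length xs. \<beta> i * int (xs!i))"
    unfolding \<beta>'_def by (simp add: sum.lessThan_Suc_shift sum_distrib_left mult.assoc del: sum.lessThan_Suc)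
  also have "\<dots> = int (Gcd (set (x # xs)))" using \<beta> uv by simp
  finally show ?case by blast
qed simp

lemma int_mod_diff_add_mod:
  "(int ((x + a) mod n) - int ((x + b) mod n)) mod int n = (int a - int b) mod int n"
proof -
  have "(int ((x + a) mod n) - int ((x + b) mod n)) mod int n =
      (int (x + a) mod int n - int (x + b) mod int n) mod int n"
    by (simp only: zmod_int)
  also have "\<dots> = (int (x + a) - int (x + b)) mod int n" by (rule mod_diff_eq)
  finally show ?thesis by simp
qed

section \<open>The tonnetz\<close>

locale tonnetz_setting =
  fixes n :: nat and L :: "nat list" and k :: nat
  assumes two_le_k: "2 \<le> k" and length_L: "length L = k"
    and L_pos: "\<forall>i<k. 0 < L!i" and n_eq: "n = sum_list L"
begin

abbreviation T :: "nat set set" where "T \<equiv> tonnetz n L"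

definition psum :: "(nat \<Rightarrow> nat) \<Rightarrow> nat \<Rightarrow> nat" where
  "psum \<sigma> m = (\<Sum>j<m. L!(\<sigma> j))"

lemma n_eq_sum: "n = (\<Sum>i<k. L!i)"
  using n_eq length_L by (simp add: sum_list_sum_nth atLeast0LessThan)

lemma n_pos: "0 < n"
proof -
  have "L!0 \<le> (\<Sum>i<k. L!i)" using two_le_k by (intro member_le_sum) auto
  moreover have "0 < L!0" using L_pos two_le_k by auto
  ultimately show ?thesis using n_eq_sum by linarith
qed

lemma psum_permutes: "\<sigma> permutes {..<k} \<Longrightarrow> psum \<sigma> k = n"
  unfolding psum_def n_eq_sum using sum.permute[of \<sigma> "{..<k}" "\<lambda>j. L!j"] by (simp add: comp_def)

lemma Delta_eq: "Delta n L x \<sigma> = {(x + psum \<sigma> m) mod n | m. m < k}"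
  unfolding Delta_def psum_def length_L ..

lemma tonnetz_eq: "T = {S. S \<noteq> {} \<and> (\<exists>x<n. \<exists>\<sigma>. \<sigma> permutes {..<k} \<and> S \<subseteq> Delta n L x \<sigma>)}"
  unfolding tonnetz_def length_L atLeast0LessThan ..

lemma tonnetz_downward_closed: "S \<in> T \<Longrightarrow> A \<subseteq> S \<Longrightarrow> A \<noteq> {} \<Longrightarrow> A \<in> T"
  unfolding tonnetz_def by blast

lemma Union_tonnetz: "\<Union>T \<subseteq> {..<n}"
  unfolding tonnetz_eq Delta_eq using n_pos by auto

lemma in_Delta:
  assumes "x < n" "\<sigma> permutes {..<k}" "m \<le> k"
  shows "(x + psum \<sigma> m) mod n \<in> Delta n L x \<sigma>"
proof (cases "m = k")
  case True
  then have "(x + psum \<sigma> m) mod n = (x + psum \<sigma> 0) mod n"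
    using assms psum_permutes by (simp add: psum_def)
  then show ?thesis using two_le_k unfolding Delta_eq by force
qed (use assms in \<open>auto simp: Delta_eq\<close>)

lemma Delta_in_tonnetz: "x < n \<Longrightarrow> \<sigma> permutes {..<k} \<Longrightarrow> Delta n L x \<sigma> \<in> T"
  unfolding tonnetz_eq using in_Delta[of x \<sigma> 0] by auto

lemma singleton_in_tonnetz: "\<forall>x<n. {x} \<in> T"
  using in_Delta[of _ id 0] Delta_in_tonnetz[of _ id] tonnetz_downward_closed
  by (simp add: psum_def permutes_id) blast

lemma permutes_with_first_two:
  assumes "i < k" "j < k" "i \<noteq> j"
  obtains \<sigma> where "\<sigma> permutes {..<k}" "\<sigma> 0 = i" "\<sigma> 1 = j"
proof
  define t where "t = Transposition.transpose 0 i"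
  have tj: "t j < k" "t j \<noteq> 0" using assms two_le_k unfolding t_def transpose_def by auto
  show "(t \<circ> Transposition.transpose 1 (t j)) permutes {..<k}"
    unfolding t_def by (rule permutes_compose) (use assms two_le_k tj in \<open>auto simp: t_def intro!: permutes_swap_id\<close>)
  show "(t \<circ> Transposition.transpose 1 (t j)) 0 = i" "(t \<circ> Transposition.transpose 1 (t j)) 1 = j"
    using tj assms(3) unfolding t_def by (auto simp: transpose_def)
qed

lemma two_steps_in_tonnetz:
  assumes "v < n" "i < k" "j < k" "i \<noteq> j"
  shows "{v, (v + L!i) mod n, ((v + L!i) mod n + L!j) mod n} \<in> T"
proof -
  obtain \<sigma> where \<sigma>: "\<sigma> permutes {..<k}" "\<sigma> 0 = i" "\<sigma> 1 = j"
    using permutes_with_first_two assms by blast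
  have "((v + L!i) mod n + L!j) mod n = (v + psum \<sigma> 2) mod n"
    using \<sigma> by (simp add: psum_def numeral_2_eq_2 mod_add_left_eq add.assoc)
  then have "{v, (v + L!i) mod n, ((v + L!i) mod n + L!j) mod n} \<subseteq> Delta n L v \<sigma>"
    using in_Delta[OF assms(1) \<sigma>(1), of 0] in_Delta[OF assms(1) \<sigma>(1), of 1]
      in_Delta[OF assms(1) \<sigma>(1), of 2] assms two_le_k \<sigma>
    by (simp add: psum_def)
  then show ?thesis using Delta_in_tonnetz[OF assms(1) \<sigma>(1)] tonnetz_downward_closed by blast
qed

lemma step_in_tonnetz:
  assumes "v < n" "i < k"
  shows "{v, (v + L!i) mod n} \<in> T"
proof -
  define j where "j = (if i = 0 then 1 else (0::nat))"
  have "j < k" "i \<noteq> j" using two_le_k unfolding j_def by auto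
  from two_steps_in_tonnetz[OF assms this] show ?thesis
    by (rule tonnetz_downward_closed) auto
qed

lemma E_path_step_counts:
  "set ts \<subseteq> {..<k} \<Longrightarrow> E_path n L v (step_counts k ts) = walk n L v (sort ts)"
  unfolding E_path_eq_walk_block_list length_L sort_eq_block_list[of ts k]
  by (auto simp: step_counts_def intro!: arg_cong[where f = "walk n L v"] block_list_cong)

lemma edge_path_walk: "v < n \<Longrightarrow> set ts \<subseteq> {..<k} \<Longrightarrow> edge_path T (walk n L v ts)"
proof (induction ts arbitrary: v)
  case Nil then show ?case using singleton_in_tonnetz by (simp add: edge_path_def)
next
  case (Cons t ts)
  let ?w = "(v + L!t) mod n"
  obtain R where R: "walk n L ?w ts = ?w # R" by (cases ts) auto
  have "edge_path T (walk n L ?w ts)" using Cons n_pos by simp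
  then show ?case
    using R Cons.prems singleton_in_tonnetz step_in_tonnetz[of v t] by (simp add: edge_path_Cons_Cons)
qed

lemma edge_equiv_swap_steps:
  assumes "v < n" "i < k" "j < k"
  shows "edge_equiv T (walk n L v (i # j # ts)) (walk n L v (j # i # ts))"
proof (cases "i = j")
  case False
  let ?a = "(v + L!i) mod n" and ?a' = "(v + L!j) mod n" and ?b = "((v + L!i) mod n + L!j) mod n"
  have b: "(?a' + L!i) mod n = ?b" by (simp only: mod_add_left_eq) (simp add: add_ac)
  obtain R where R: "walk n L ?b ts = ?b # R" by (cases ts) auto
  have "elem_move T (v # ?a # ?b # R) (v # ?b # R)"
    using two_steps_in_tonnetz[OF assms False] unfolding elem_move_def by (metis append_Cons append_Nil)
  moreover have "elem_move T (v # ?a' # ?b # R) (v # ?b # R)"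
    using two_steps_in_tonnetz[OF assms(1,3,2)] False b unfolding elem_move_def
    by (metis append_Cons append_Nil)
  ultimately have "edge_equiv T (v # ?a # ?b # R) (v # ?a' # ?b # R)"
    by (blast intro: rtranclp.rtrancl_into_rtrancl r_into_rtranclp)
  then show ?thesis using R b by simp
qed simp

lemma edge_equiv_insort:
  "v < n \<Longrightarrow> set (t # ts) \<subseteq> {..<k} \<Longrightarrow> edge_equiv T (walk n L v (t # ts)) (walk n L v (insort t ts))"
proof (induction ts arbitrary: v)
  case (Cons s ts)
  show ?case
  proof (cases "t \<le> s")
    case False
    have "edge_equiv T (walk n L v (t # s # ts)) (walk n L v (s # t # ts))"
      using edge_equiv_swap_steps Cons.prems by simp
    moreover have "edge_equiv T (walk n L v (s # t # ts)) (walk n L v (s # insort t ts))"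
      using Cons n_pos by (simp add: edge_equiv_Cons)
    ultimately show ?thesis using False by (simp add: rtranclp_trans)
  qed simp
qed simp

lemma edge_equiv_sort:
  "v < n \<Longrightarrow> set ts \<subseteq> {..<k} \<Longrightarrow> edge_equiv T (walk n L v ts) (walk n L v (sort ts))"
proof (induction ts arbitrary: v)
  case (Cons t ts)
  have "edge_equiv T (walk n L v (t # ts)) (walk n L v (t # sort ts))"
    using Cons n_pos by (simp add: edge_equiv_Cons)
  also have "edge_equiv T \<dots> (walk n L v (insort t (sort ts)))"
    using edge_equiv_insort Cons.prems by simp
  finally show ?case by simp
qed simp

lemma psum_add: "psum \<sigma> (p + m) = psum \<sigma> p + (\<Sum>j<m. L!(\<sigma> (p + j)))"
  by (induction m) (auto simp: psum_def)

lemma walk_map_permutation: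
  assumes "x < n" "p \<le> q"
  shows "walk n L ((x + psum \<sigma> p) mod n) (map \<sigma> [p..<q]) = map (\<lambda>m. (x + psum \<sigma> m) mod n) [p..<Suc q]"
proof (rule nth_equalityI)
  fix m assume "m < length (walk n L ((x + psum \<sigma> p) mod n) (map \<sigma> [p..<q]))"
  then have m: "m \<le> q - p" by simp
  have "(\<Sum>j<m. L!(map \<sigma> [p..<q] ! j)) = (\<Sum>j<m. L!(\<sigma> (p + j)))"
    using m by (intro sum.cong) auto
  then have "walk n L ((x + psum \<sigma> p) mod n) (map \<sigma> [p..<q]) ! m = (x + psum \<sigma> (p + m)) mod n"
    using assms m n_pos by (simp add: walk_nth psum_add mod_add_left_eq add.assoc)
  moreover have "[p..<Suc q] ! m = p + m" using m assms by (intro nth_upt) linarith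
  ultimately show "walk n L ((x + psum \<sigma> p) mod n) (map \<sigma> [p..<q]) ! m = map (\<lambda>m. (x + psum \<sigma> m) mod n) [p..<Suc q] ! m"
    using m assms by (simp del: upt_Suc)
qed (use assms in simp)

lemma edge_equiv_walk_in_simplex:
  assumes "S \<in> T" "set (walk n L u ts) \<subseteq> S" "ts \<noteq> []"
  shows "edge_equiv T [u, last (walk n L u ts)] (walk n L u ts)"
  using edge_equiv_contract_simplex[of S T "walk n L u ts"] assms tonnetz_downward_closed
  by (auto intro: edge_equiv_sym simp: Suc_le_eq)

lemma walk_inside_Delta:
  assumes x: "x < n" and \<sigma>: "\<sigma> permutes {..<k}" and p: "p < k" and q: "q < k" and "p \<noteq> q"
  obtains ts where "set ts \<subseteq> {..<k}" "ts \<noteq> []"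
    "set (walk n L ((x + psum \<sigma> p) mod n) ts) \<subseteq> Delta n L x \<sigma>"
    "last (walk n L ((x + psum \<sigma> p) mod n) ts) = (x + psum \<sigma> q) mod n"
proof -
  define f where "f m = (x + psum \<sigma> m) mod n" for m
  have \<sigma>k: "set (map \<sigma> [i..<j]) \<subseteq> {..<k}" if "j \<le> k" for i j
    using \<sigma> that permutes_in_image by fastforce
  have walk_f: "walk n L (f i) (map \<sigma> [i..<j]) = map f [i..<Suc j]" if "i \<le> j" for i j
    using walk_map_permutation[OF x that] unfolding f_def .
  have f_Delta: "set (map f [i..<j]) \<subseteq> Delta n L x \<sigma>" if "j \<le> Suc k" for i j
    using in_Delta[OF x \<sigma>] that unfolding f_def by auto
  consider "p < q" | "q < p" using \<open>p \<noteq> q\<close> by linarith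
  then show ?thesis
  proof cases
    case 1
    let ?ts = "map \<sigma> [p..<q]"
    have W: "walk n L (f p) ?ts = map f [p..<Suc q]" using walk_f 1 by simp
    have "set (walk n L (f p) ?ts) \<subseteq> Delta n L x \<sigma>"
      unfolding W using f_Delta[of "Suc q" p] q by linarith
    moreover have "last (walk n L (f p) ?ts) = f q" using W 1 by simp
    ultimately show ?thesis using that[of ?ts] \<sigma>k[of q p] q 1 unfolding f_def by simp
  next
    case 2
    let ?ts = "map \<sigma> [p..<k] @ map \<sigma> [0..<q]"
    have fk: "f k = f 0" using psum_permutes[OF \<sigma>] x unfolding f_def by (simp add: psum_def)
    have W: "walk n L (f p) ?ts = map f [p..<Suc k] @ map f [Suc 0..<Suc q]"
      using walk_f[of p k] walk_f[of 0 q] p fk by (simp add: walk_append tl_upt last_map flip: map_tl del: upt_Suc)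
    have "set (walk n L (f p) ?ts) \<subseteq> Delta n L x \<sigma>"
      unfolding W set_append using f_Delta[of "Suc k" p] f_Delta[of "Suc q" "Suc 0"] q by simp
    moreover have "last (walk n L (f p) ?ts) = f q" using W p fk by (cases "q = 0") auto
    ultimately show ?thesis using that[of ?ts] \<sigma>k[of k p] \<sigma>k[of q 0] q p unfolding f_def by simp
  qed
qed

lemma edge_equiv_edge_walk:
  assumes "{u, w} \<in> T"
  obtains ts where "set ts \<subseteq> {..<k}" "edge_equiv T [u, w] (walk n L u ts)" "last (walk n L u ts) = w"
proof (cases "u = w")
  case True
  then have "elem_move T ([] @ [u, u] @ []) ([] @ [u] @ [])" unfolding elem_move_def by blast
  then show ?thesis using True by (intro that[of "[]"]) auto
next
  case False
  obtain x \<sigma> where x: "x < n" and \<sigma>: "\<sigma> permutes {..<k}" and uw: "{u, w} \<subseteq> Delta n L x \<sigma>"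
    using assms unfolding tonnetz_eq by blast
  obtain p q where p: "p < k" "u = (x + psum \<sigma> p) mod n" and q: "q < k" "w = (x + psum \<sigma> q) mod n"
    using uw unfolding Delta_eq by blast
  have "p \<noteq> q" using p q False by auto
  from walk_inside_Delta[OF x \<sigma> p(1) q(1) this] obtain ts where ts: "set ts \<subseteq> {..<k}" "ts \<noteq> []"
    "set (walk n L u ts) \<subseteq> Delta n L x \<sigma>" "last (walk n L u ts) = w"
    unfolding p(2)[symmetric] q(2)[symmetric] .
  then show ?thesis
    using edge_equiv_walk_in_simplex[OF Delta_in_tonnetz[OF x \<sigma>] ts(3,2)] by (intro that[of ts]) auto
qed

lemma edge_path_equiv_walk:
  "edge_path T p \<Longrightarrow> \<exists>ts. set ts \<subseteq> {..<k} \<and> edge_equiv T p (walk n L (hd p) ts)"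
proof (induction p)
  case (Cons u p)
  show ?case
  proof (cases p)
    case Nil then show ?thesis by (intro exI[of _ "[]"]) simp
  next
    case (Cons w rest)
    then obtain ts where ts: "set ts \<subseteq> {..<k}" "edge_equiv T p (walk n L w ts)"
      using Cons.IH Cons.prems by (auto simp: edge_path_Cons_Cons)
    obtain ts0 where ts0: "set ts0 \<subseteq> {..<k}" "edge_equiv T [u, w] (walk n L u ts0)"
      "last (walk n L u ts0) = w"
      using edge_equiv_edge_walk Cons.prems \<open>p = w # rest\<close> by (auto simp: edge_path_Cons_Cons)
    obtain R where R: "walk n L w ts = w # R" by (cases ts) auto
    have "edge_equiv T (u # p) (u # walk n L w ts)" using ts edge_equiv_Cons by blast
    also have "u # walk n L w ts = [u, w] @ R" using R by simp
    also have "edge_equiv T \<dots> (walk n L u ts0 @ R)" using ts0 edge_equiv_append_right by blast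
    also have "walk n L u ts0 @ R = walk n L u (ts0 @ ts)" using R ts0(3) by (simp add: walk_append)
    finally show ?thesis using ts ts0 by (intro exI[of _ "ts0 @ ts"]) auto
  qed
qed (simp add: edge_path_def)

lemma closed_walk_equiv_E_path:
  assumes "v < n" "set ts \<subseteq> {..<k}" "last (walk n L v ts) = v"
  shows "edge_equiv T (walk n L v ts) (E_path n L v (step_counts k ts))"
    and "admissible n L (step_counts k ts)"
proof -
  show "edge_equiv T (walk n L v ts) (E_path n L v (step_counts k ts))"
    using edge_equiv_sort assms E_path_step_counts by simp
  have "(v + sum_list (map ((!) L) ts)) mod n = v" using last_walk assms by simp
  then have "sum_list (map ((!) L) ts) mod n = 0"
    using assms(1) by (metis add.commute add_right_cancel div_mod_decomp mod_mult_self2_is_0)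
  then show "admissible n L (step_counts k ts)"
    using sum_list_map_eq_sum_count2[OF assms(2)] length_L
    by (simp add: admissible_def step_counts_def)
qed

lemma closed_edge_path_homotopic_E_path:
  assumes "v < n" "closed_edge_path T v p"
  shows "\<exists>ps. admissible n L ps \<and> edge_homotopic T p (E_path n L v ps)"
proof -
  have p: "edge_path T p" "hd p = v" "last p = v" using assms unfolding closed_edge_path_def by auto
  then obtain ts where ts: "set ts \<subseteq> {..<k}" "edge_equiv T p (walk n L v ts)"
    using edge_path_equiv_walk by blast
  have "last (walk n L v ts) = v" using edge_equiv_ends[OF ts(2)] p by (auto simp: edge_path_def)
  note closed = closed_walk_equiv_E_path[OF assms(1) ts(1) this]
  have "edge_path T (E_path n L v (step_counts k ts))"
    using E_path_step_counts ts(1) edge_path_walk assms(1) by simp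
  then show ?thesis
    using closed p(1) ts(2) unfolding edge_homotopic_def by (blast intro: rtranclp_trans)
qed

section \<open>The classes of the paths E(p)\<close>

lemma walk_homologous:
  "v < n \<Longrightarrow> edge_equiv T (walk n L v ts) q \<Longrightarrow> homologous n T (path_chain (walk n L v ts)) (path_chain q)"
  using edge_equiv_homologous[OF Union_tonnetz singleton_in_tonnetz] set_walk by blast

lemma admissible_iff: "admissible n L ps \<longleftrightarrow> length ps = k \<and> (\<Sum>i<k. ps!i * L!i) mod n = 0"
  unfolding admissible_def length_L ..

lemma last_E_path: "v < n \<Longrightarrow> admissible n L ps \<Longrightarrow> last (E_path n L v ps) = v"
  unfolding E_path_eq_walk_block_list admissible_iff
  by (simp add: last_walk sum_list_map_block_list length_L mult.commute mod_add_right_eq[symmetric])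

definition represented :: "nat \<Rightarrow> (nat \<times> nat \<Rightarrow> int) \<Rightarrow> bool" where
  "represented v z \<longleftrightarrow> (\<exists>ps. admissible n L ps \<and> homologous n T z (path_chain (E_path n L v ps)))"

lemma represented_homologous: "homologous n T z z' \<Longrightarrow> represented v z' \<Longrightarrow> represented v z"
  unfolding represented_def using homologous_trans by blast

lemma represented_closed_walk:
  assumes "v < n" "set ts \<subseteq> {..<k}" "last (walk n L v ts) = v"
  shows "represented v (path_chain (walk n L v ts))"
  using closed_walk_equiv_E_path[OF assms] walk_homologous[OF assms(1)] unfolding represented_def by blast

lemma represented_zero: "v < n \<Longrightarrow> represented v (\<lambda>e. 0)"
  using represented_closed_walk[of v "[]"] by simp

lemma E_path_add:
  assumes v: "v < n" and ps: "admissible n L ps" and qs: "admissible n L qs"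
  shows "admissible n L (map2 (+) ps qs)"
    and "homologous n T (\<lambda>e. path_chain (E_path n L v ps) e + path_chain (E_path n L v qs) e)
           (path_chain (E_path n L v (map2 (+) ps qs)))"
proof -
  let ?ts = "block_list k ((!) ps) @ block_list k ((!) qs)"
  have len: "length ps = k" "length qs = k" using ps qs by (auto simp: admissible_iff)
  have ts: "set ?ts \<subseteq> {..<k}" using set_block_list by auto
  have closed: "last (walk n L v ?ts) = v"
    using last_E_path[OF v ps] last_E_path[OF v qs]
    by (simp add: last_walk_append E_path_eq_walk_block_list length_L)
  have counts: "step_counts k ?ts = map2 (+) ps qs"
    using len by (auto simp: step_counts_def count_list_block_list intro: nth_equalityI)
  show "admissible n L (map2 (+) ps qs)"
    using closed_walk_equiv_E_path(2)[OF v ts closed] counts by simp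
  have "(\<lambda>e. path_chain (E_path n L v ps) e + path_chain (E_path n L v qs) e) = path_chain (walk n L v ?ts)"
    using last_E_path[OF v ps] by (simp add: fun_eq_iff path_chain_walk_append E_path_eq_walk_block_list length_L)
  then show "homologous n T (\<lambda>e. path_chain (E_path n L v ps) e + path_chain (E_path n L v qs) e)
      (path_chain (E_path n L v (map2 (+) ps qs)))"
    using walk_homologous[OF v closed_walk_equiv_E_path(1)[OF v ts closed]] counts by simp
qed

lemma represented_add:
  assumes "v < n" "represented v z" "represented v w"
  shows "represented v (\<lambda>e. z e + w e)"
proof -
  obtain ps qs where ps: "admissible n L ps" "homologous n T z (path_chain (E_path n L v ps))"
    and qs: "admissible n L qs" "homologous n T w (path_chain (E_path n L v qs))"
    using assms unfolding represented_def by blast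
  have "homologous n T (\<lambda>e. z e + w e) (\<lambda>e. path_chain (E_path n L v ps) e + path_chain (E_path n L v qs) e)"
    using homologous_add[OF ps(2) qs(2)] .
  also have "homologous n T \<dots> (path_chain (E_path n L v (map2 (+) ps qs)))"
    using E_path_add(2)[OF assms(1) ps(1) qs(1)] .
  finally show ?thesis
    using E_path_add(1)[OF assms(1) ps(1) qs(1)] unfolding represented_def by blast
qed

lemma edge_equiv_rounds: "v < n \<Longrightarrow> edge_equiv T (walk n L v (concat (replicate N [0..<k]))) [v]"
proof (induction N)
  case (Suc N)
  have W: "walk n L v [0..<k] = map (\<lambda>m. (v + psum id m) mod n) [0..<Suc k]"
    using walk_map_permutation[OF Suc.prems, of 0 k id] Suc.prems by (simp add: psum_def)
  then have last: "last (walk n L v [0..<k]) = v"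
    using psum_permutes[OF permutes_id] Suc.prems by simp
  have "set (walk n L v [0..<k]) \<subseteq> Delta n L v id"
    using W in_Delta[OF Suc.prems permutes_id] by auto
  then have "edge_equiv T [v, v] (walk n L v [0..<k])"
    using edge_equiv_walk_in_simplex[OF Delta_in_tonnetz[OF Suc.prems permutes_id]] last two_le_k by fastforce
  moreover have "elem_move T [v, v] [v]"
    unfolding elem_move_def by (metis append.left_neutral append_Nil2)
  ultimately have "edge_equiv T (walk n L v [0..<k]) [v]"
    by (blast intro: edge_equiv_sym rtranclp.rtrancl_into_rtrancl)
  then have "edge_equiv T (walk n L v [0..<k] @ tl (walk n L v (concat (replicate N [0..<k]))))
      ([v] @ tl (walk n L v (concat (replicate N [0..<k]))))"
    by (rule edge_equiv_append_right)
  also have "[v] @ tl (walk n L v (concat (replicate N [0..<k]))) = walk n L v (concat (replicate N [0..<k]))"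
    by (cases "concat (replicate N [0..<k])") auto
  also have "edge_equiv T \<dots> [v]" by (rule Suc.IH[OF Suc.prems])
  finally show ?case using last by (simp add: walk_append)
qed simp

lemma E_path_replicate_null:
  assumes "v < n"
  shows "homologous n T (path_chain (E_path n L v (replicate k N))) (\<lambda>e. 0)"
proof -
  let ?ts = "concat (replicate N [0..<k])"
  have ts: "set ?ts \<subseteq> {..<k}" by auto
  have rounds: "edge_equiv T (walk n L v ?ts) [v]" using edge_equiv_rounds[OF assms] .
  then have "last (walk n L v ?ts) = v" using edge_equiv_ends by fastforce
  moreover have "step_counts k ?ts = replicate k N"
  proof -
    have "count_list ?ts i = (if i < k then N else 0)" for i
    proof -
      have "count_list [0..<m] i = (if i < m then 1 else 0)" for m by (induction m) auto
      then show ?thesis by (induction N) auto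
    qed
    then show ?thesis by (auto simp: step_counts_def intro: nth_equalityI)
  qed
  ultimately have "edge_equiv T (walk n L v ?ts) (E_path n L v (replicate k N))"
    using closed_walk_equiv_E_path(1)[OF assms ts] by simp
  then have "edge_equiv T (E_path n L v (replicate k N)) [v]"
    using rounds by (blast intro: edge_equiv_sym rtranclp_trans)
  then show ?thesis
    using walk_homologous[OF assms] unfolding E_path_eq_walk_block_list by fastforce
qed

lemma represented_uminus:
  assumes v: "v < n" and z: "represented v z"
  shows "represented v (\<lambda>e. - z e)"
proof -
  obtain ps where ps: "admissible n L ps" "homologous n T z (path_chain (E_path n L v ps))"
    using z unfolding represented_def by blast
  define N where "N = sum_list ps"
  define qs where "qs = map (\<lambda>i. N - ps!i) [0..<k]"
  have le: "ps!i \<le> N" if "i < k" for i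
    using ps(1) that unfolding N_def admissible_iff by (simp add: elem_le_sum_list)
  have sum_qs: "(\<Sum>i<k. qs!i * L!i) + (\<Sum>i<k. ps!i * L!i) = N * n"
    unfolding n_eq_sum sum_distrib_left sum.distrib[symmetric] qs_def
    by (intro sum.cong) (auto simp: le add_mult_distrib[symmetric])
  have "(\<Sum>i<k. qs!i * L!i) mod n = ((\<Sum>i<k. qs!i * L!i) + (\<Sum>i<k. ps!i * L!i) mod n) mod n"
    using ps(1) by (simp add: admissible_iff)
  also have "\<dots> = 0" by (simp only: mod_add_right_eq sum_qs) simp
  finally have qs: "admissible n L qs" unfolding admissible_iff qs_def by simp
  have "map2 (+) qs ps = replicate k N"
    using le ps(1) by (auto simp: qs_def admissible_iff intro: nth_equalityI)
  then have "homologous n T (\<lambda>e. path_chain (E_path n L v qs) e + path_chain (E_path n L v ps) e)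
      (path_chain (E_path n L v (replicate k N)))"
    using E_path_add(2)[OF v qs ps(1)] by simp
  also have "homologous n T \<dots> (\<lambda>e. 0)" by (rule E_path_replicate_null[OF v])
  finally have "homologous n T
      (\<lambda>e. (path_chain (E_path n L v qs) e + path_chain (E_path n L v ps) e) + - path_chain (E_path n L v ps) e)
      (\<lambda>e. 0 + - path_chain (E_path n L v ps) e)"
    by (rule homologous_add[OF _ homologous_refl])
  then have "homologous n T (path_chain (E_path n L v qs)) (\<lambda>e. - path_chain (E_path n L v ps) e)"
    by simp
  moreover have "homologous n T (\<lambda>e. - z e) (\<lambda>e. - path_chain (E_path n L v ps) e)"
    using homologous_scale[OF ps(2), of "-1"] by simp
  ultimately show ?thesis
    using qs homologous_sym homologous_trans unfolding represented_def by blast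
qed

lemma represented_scale:
  assumes v: "v < n" and z: "represented v z"
  shows "represented v (\<lambda>e. m * z e)"
proof -
  have nat: "represented v (\<lambda>e. int N * z e)" for N
  proof (induction N)
    case 0 then show ?case using represented_zero[OF v] by simp
  next
    case (Suc N)
    from represented_add[OF v z Suc] show ?case by (simp add: distrib_right)
  qed
  show ?thesis
  proof (cases "0 \<le> m")
    case True then show ?thesis using nat[of "nat m"] by simp
  next
    case False then show ?thesis using represented_uminus[OF v nat[of "nat (- m)"]] by simp
  qed
qed

lemma represented_sum:
  assumes "v < n"
  shows "finite A \<Longrightarrow> (\<And>i. i \<in> A \<Longrightarrow> represented v (z i)) \<Longrightarrow> represented v (\<lambda>e. \<Sum>i\<in>A. z i e)"
proof (induction A rule: finite_induct)
  case empty then show ?case using represented_zero[OF assms] by simp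
next
  case (insert i A)
  then show ?case using represented_add[OF assms, of "z i"] by simp
qed

lemma homologous_E_path_shift:
  assumes v: "v < n" and ps: "admissible n L ps" and qs: "admissible n L qs"
    and shift: "\<forall>i<k. ps!i = qs!i + M"
  shows "homologous n T (path_chain (E_path n L v ps)) (path_chain (E_path n L v qs))"
proof -
  have M: "admissible n L (replicate k M)"
    unfolding admissible_iff using n_eq_sum by (simp add: sum_distrib_left[symmetric])
  have "map2 (+) qs (replicate k M) = ps"
    using shift ps qs by (auto simp: admissible_iff intro: nth_equalityI)
  then have "homologous n T (path_chain (E_path n L v ps))
      (\<lambda>e. path_chain (E_path n L v qs) e + path_chain (E_path n L v (replicate k M)) e)"
    using homologous_sym[OF E_path_add(2)[OF v qs M]] by simp
  also have "homologous n T \<dots> (\<lambda>e. path_chain (E_path n L v qs) e + 0)"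
    by (intro homologous_add homologous_refl E_path_replicate_null v)
  finally show ?thesis by simp
qed

lemma homologous_E_path_if_shift:
  assumes v: "v < n" and ps: "admissible n L ps" and qs: "admissible n L qs"
    and shift: "\<forall>i<k. int (ps!i) - int (qs!i) = m"
  shows "homologous n T (path_chain (E_path n L v ps)) (path_chain (E_path n L v qs))"
proof (cases "0 \<le> m")
  case True
  then have "\<forall>i<k. ps!i = qs!i + nat m" using shift by force
  then show ?thesis by (rule homologous_E_path_shift[OF v ps qs])
next
  case False
  then have "\<forall>i<k. qs!i = ps!i + nat (- m)" using shift by force
  then show ?thesis by (rule homologous_sym[OF homologous_E_path_shift[OF v qs ps]])
qed

section \<open>Cycles\<close>

lemma exists_walk_between:
  assumes "reduced L" "a < n" "b < n"
  shows "\<exists>ts. set ts \<subseteq> {..<k} \<and> last (walk n L a ts) = b"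
proof -
  obtain \<beta> where \<beta>: "(\<Sum>i<k. \<beta> i * int (L!i)) = 1"
    using Gcd_set_int_combination[of L] assms(1) length_L unfolding reduced_def by auto
  define d where "d = int b - int a"
  define c where "c i = nat ((d * \<beta> i) mod int n)" for i
  have c: "int (c i) = (d * \<beta> i) mod int n" for i
    unfolding c_def using n_pos by simp
  have "int (\<Sum>i<k. c i * L!i) mod int n = (\<Sum>i<k. (d * \<beta> i) mod int n * int (L!i)) mod int n"
    by (simp add: c of_nat_sum)
  also have "\<dots> = (\<Sum>i<k. (d * \<beta> i) mod int n * int (L!i) mod int n) mod int n"
    by (rule mod_sum_eq[symmetric])
  also have "\<dots> = (\<Sum>i<k. d * \<beta> i * int (L!i) mod int n) mod int n"
    by (simp add: mod_mult_left_eq)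
  also have "\<dots> = (\<Sum>i<k. d * \<beta> i * int (L!i)) mod int n"
    by (rule mod_sum_eq)
  also have "(\<Sum>i<k. d * \<beta> i * int (L!i)) = d"
    using \<beta> by (simp add: sum_distrib_left[symmetric] mult.assoc)
  finally have sum_c: "int (\<Sum>i<k. c i * L!i) mod int n = d mod int n" .
  have "int (last (walk n L a (block_list k c))) = (int a + int (\<Sum>i<k. c i * L!i)) mod int n"
    using assms(2) by (simp add: last_walk sum_list_map_block_list zmod_int mult.commute)
  also have "\<dots> = (int a + d) mod int n"
    using sum_c by (metis mod_add_right_eq)
  also have "\<dots> = int b" using assms(3) unfolding d_def by simp
  finally show ?thesis using set_block_list by auto
qed

lemma represented_edge_loop:
  assumes L: "reduced L" and v: "v < n" and ab: "{a, b} \<in> T"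
    and ga: "set ga \<subseteq> {..<k}" "last (walk n L v ga) = a"
    and gb: "set gb \<subseteq> {..<k}" "last (walk n L v gb) = b"
  shows "represented v (\<lambda>e. (if e = (a, b) then 1 else 0) +
                           (path_chain (walk n L v ga) e - path_chain (walk n L v gb) e))"
proof -
  have "a < n" "b < n" using ab Union_tonnetz by auto
  obtain h where h: "set h \<subseteq> {..<k}" "edge_equiv T [a, b] (walk n L a h)" "last (walk n L a h) = b"
    using edge_equiv_edge_walk[OF ab] by blast
  obtain r where r: "set r \<subseteq> {..<k}" "last (walk n L b r) = v"
    using exists_walk_between[OF L \<open>b < n\<close> v] by blast
  let ?X = "walk n L v (ga @ h @ r)" and ?Y = "walk n L v (gb @ r)"
  have "represented v (path_chain ?X)"
    using represented_closed_walk[OF v] ga h r by (simp add: last_walk_append)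
  moreover have "represented v (\<lambda>e. - path_chain ?Y e)"
    using represented_uminus[OF v represented_closed_walk[OF v]] gb r by (simp add: last_walk_append)
  ultimately have "represented v (\<lambda>e. path_chain ?X e + - path_chain ?Y e)"
    by (rule represented_add[OF v])
  moreover have "(\<lambda>e. path_chain ?X e + - path_chain ?Y e) =
      (\<lambda>e. path_chain (walk n L a h) e + (path_chain (walk n L v ga) e - path_chain (walk n L v gb) e))"
    using ga(2) gb(2) h(3) by (simp add: fun_eq_iff path_chain_walk_append last_walk_append)
  moreover have "homologous n T (path_chain [a, b]) (path_chain (walk n L a h))"
    using edge_equiv_homologous[OF Union_tonnetz singleton_in_tonnetz h(2)] \<open>a < n\<close> \<open>b < n\<close> by simp
  then have "homologous n T
      (\<lambda>e. path_chain [a, b] e + (path_chain (walk n L v ga) e - path_chain (walk n L v gb) e))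
      (\<lambda>e. path_chain (walk n L a h) e + (path_chain (walk n L v ga) e - path_chain (walk n L v gb) e))"
    by (rule homologous_add[OF _ homologous_refl])
  ultimately show ?thesis
    using represented_homologous by (simp add: path_chain_Cons_Cons)
qed

lemma cycle_represented:
  assumes L: "reduced L" and v: "v < n" and z: "cycle1 n T z"
  shows "represented v z"
proof -
  have "\<forall>y\<in>{..<n}. \<exists>g. set g \<subseteq> {..<k} \<and> last (walk n L v g) = y"
    using exists_walk_between[OF L v] by blast
  from bchoice[OF this] obtain g where g: "\<forall>y\<in>{..<n}. set (g y) \<subseteq> {..<k} \<and> last (walk n L v (g y)) = y"
    by blast
  define loop where "loop a b e = (if e = (a, b) then 1 else 0) +
      (path_chain (walk n L v (g a)) e - path_chain (walk n L v (g b)) e)" for a b e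
  have "z e = (\<Sum>a<n. \<Sum>b<n. z (a, b) * (if e = (a, b) then 1 else 0))" for e
    using chain1_sum_edges[OF Union_tonnetz] z unfolding cycle1_def by blast
  also have "\<dots> e = (\<Sum>a<n. \<Sum>b<n. z (a, b) * loop a b e)" for e
  proof -
    have "(\<Sum>a<n. \<Sum>b<n. z (a, b) * (path_chain (walk n L v (g a)) e - path_chain (walk n L v (g b)) e)) = 0"
      using cycle_sum_potential_diff[of n z "\<lambda>y. path_chain (walk n L v (g y)) e"] z
      unfolding cycle1_def by blast
    then show ?thesis
      unfolding loop_def by (simp add: distrib_left sum.distrib)
  qed
  finally have z_eq: "z = (\<lambda>e. \<Sum>a<n. \<Sum>b<n. z (a, b) * loop a b e)" by blast
  have "represented v (\<lambda>e. z (a, b) * loop a b e)" if "a < n" "b < n" for a b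
  proof (cases "z (a, b) = 0")
    case True then show ?thesis using represented_zero[OF v] by simp
  next
    case False
    then have "{a, b} \<in> T" using z unfolding cycle1_def chain1_def by blast
    from represented_edge_loop[OF L v this] g that have "represented v (loop a b)"
      unfolding loop_def by simp
    then show ?thesis by (rule represented_scale[OF v])
  qed
  then have "represented v (\<lambda>e. \<Sum>a<n. \<Sum>b<n. z (a, b) * loop a b e)"
    by (intro represented_sum[OF v]) auto
  then show ?thesis by (subst z_eq)
qed

end

section \<open>An invariant cocycle for generic L\<close>

locale generic_tonnetz = tonnetz_setting + assumes generic_L: "generic L"
begin

definition lsum :: "nat set \<Rightarrow> nat" where
  "lsum I = (\<Sum>i\<in>I. L!i)"

definition set_weight :: "nat \<Rightarrow> nat set \<Rightarrow> int" where
  "set_weight i I = (if i \<in> I then 1 else 0) - (if 0 \<in> I then 1 else 0)"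

text \<open>For an edge \<open>(a, b)\<close> of the tonnetz the chosen \<open>I\<close> is the set of step types leading from
  \<open>a\<close> to \<open>b\<close>; by genericity it is unique up to exchanging \<open>{}\<close> and \<open>{..<k}\<close>, on which
  \<open>set_weight\<close> agrees (\<open>edge_weight_eq\<close>).\<close>

definition edge_weight :: "nat \<Rightarrow> nat \<Rightarrow> nat \<Rightarrow> int" where
  "edge_weight i a b =
     set_weight i (SOME I. I \<subseteq> {..<k} \<and> int (lsum I) mod int n = (int b - int a) mod int n)"

definition pairing :: "nat \<Rightarrow> (nat \<times> nat \<Rightarrow> int) \<Rightarrow> int" where
  "pairing i z = (\<Sum>a<n. \<Sum>b<n. z (a, b) * edge_weight i a b)"

lemma lsum_inj: "I \<subseteq> {..<k} \<Longrightarrow> J \<subseteq> {..<k} \<Longrightarrow> lsum I = lsum J \<Longrightarrow> I = J"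
  using generic_L length_L unfolding generic_def lsum_def by (auto simp: atLeast0LessThan)

lemma lsum_le: "I \<subseteq> {..<k} \<Longrightarrow> lsum I \<le> n"
  unfolding lsum_def n_eq_sum by (rule sum_mono2) auto

lemma lsum_all: "lsum {..<k} = n"
  unfolding lsum_def n_eq_sum ..

lemma lsum_mod_eq_cases:
  assumes "I \<subseteq> {..<k}" "J \<subseteq> {..<k}" "lsum I mod n = lsum J mod n"
  shows "I = J \<or> (I = {} \<and> J = {..<k}) \<or> (I = {..<k} \<and> J = {})"
proof -
  have empty: "K = {}" if "K \<subseteq> {..<k}" "lsum K = 0" for K
    using lsum_inj[of K "{}"] that by (simp add: lsum_def)
  have all: "K = {..<k}" if "K \<subseteq> {..<k}" "lsum K = n" for K
    using lsum_inj[of K "{..<k}"] that lsum_all by simp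
  have "lsum I = lsum J \<or> (lsum I = 0 \<and> lsum J = n) \<or> (lsum I = n \<and> lsum J = 0)"
  proof -
    have "x mod n = (if x = n then 0 else x)" if "x \<le> n" for x
      using that by auto
    then show ?thesis using assms(3) lsum_le[OF assms(1)] lsum_le[OF assms(2)] n_pos
      by (simp split: if_splits)
  qed
  then show ?thesis using lsum_inj[OF assms(1,2)] empty all assms(1,2) by blast
qed

lemma set_weight_cong:
  assumes "i < k" "I \<subseteq> {..<k}" "J \<subseteq> {..<k}" "int (lsum I) mod int n = int (lsum J) mod int n"
  shows "set_weight i I = set_weight i J"
proof -
  have "int (lsum I mod n) = int (lsum J mod n)" using assms(4) by (simp only: zmod_int)
  then have "lsum I mod n = lsum J mod n" by (rule of_nat_eq_iff[THEN iffD1])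
  then have "I = J \<or> (I = {} \<and> J = {..<k}) \<or> (I = {..<k} \<and> J = {})"
    by (rule lsum_mod_eq_cases[OF assms(2,3)])
  then show ?thesis using assms(1) two_le_k unfolding set_weight_def by auto
qed

lemma edge_weight_eq:
  assumes "i < k" "I \<subseteq> {..<k}" "int (lsum I) mod int n = (int b - int a) mod int n"
  shows "edge_weight i a b = set_weight i I"
proof -
  let ?P = "\<lambda>J. J \<subseteq> {..<k} \<and> int (lsum J) mod int n = (int b - int a) mod int n"
  have P: "?P (Eps ?P)" by (rule someI[of ?P I]) (use assms(2,3) in blast)
  have "edge_weight i a b = set_weight i (Eps ?P)" unfolding edge_weight_def ..
  also have "\<dots> = set_weight i I"
    using set_weight_cong[OF assms(1), of "Eps ?P" I] P assms(2,3) by argo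
  finally show ?thesis .
qed

lemma lsum_image_interval:
  assumes "\<sigma> permutes {..<k}" "p \<le> q"
  shows "lsum (\<sigma> ` {p..<q}) + psum \<sigma> p = psum \<sigma> q"
proof -
  have "lsum (\<sigma> ` {p..<q}) = (\<Sum>j\<in>{p..<q}. L!(\<sigma> j))"
    unfolding lsum_def using permutes_inj[OF assms(1)]
    by (simp add: sum.reindex inj_on_subset[of _ UNIV])
  moreover have "psum \<sigma> q = psum \<sigma> p + (\<Sum>j\<in>{p..<q}. L!(\<sigma> j))"
    unfolding psum_def using sum.atLeastLessThan_concat[of 0 p q "\<lambda>j. L!(\<sigma> j)"] assms(2)
    by (simp add: atLeast0LessThan)
  ultimately show ?thesis by simp
qed

lemma set_weight_image_interval:
  assumes "\<sigma> permutes {..<k}" "p \<le> q"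
  shows "set_weight i (\<sigma> ` {p..<q}) = set_weight i (\<sigma> ` {..<q}) - set_weight i (\<sigma> ` {..<p})"
proof -
  have "\<sigma> ` {..<q} = \<sigma> ` {..<p} \<union> \<sigma> ` {p..<q}" using assms(2) by (auto simp flip: image_Un)
  moreover have "\<sigma> ` {..<p} \<inter> \<sigma> ` {p..<q} = {}"
    using permutes_inj[OF assms(1)] by (auto simp: inj_eq)
  ultimately show ?thesis unfolding set_weight_def by auto
qed

lemma set_weight_complement:
  "i < k \<Longrightarrow> I \<subseteq> {..<k} \<Longrightarrow> set_weight i ({..<k} - I) = - set_weight i I"
  using two_le_k unfolding set_weight_def by auto

lemma edge_weight_Delta:
  assumes x: "x < n" and \<sigma>: "\<sigma> permutes {..<k}" and "p < k" "q < k" "i < k"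
  shows "edge_weight i ((x + psum \<sigma> p) mod n) ((x + psum \<sigma> q) mod n) =
    set_weight i (\<sigma> ` {..<q}) - set_weight i (\<sigma> ` {..<p})"
proof -
  have \<sigma>k: "\<sigma> ` {..<k} = {..<k}" using \<sigma> permutes_image by blast
  have diff: "(int ((x + psum \<sigma> q) mod n) - int ((x + psum \<sigma> p) mod n)) mod int n =
      (int (psum \<sigma> q) - int (psum \<sigma> p)) mod int n"
    by (rule int_mod_diff_add_mod)
  show ?thesis
  proof (cases "p \<le> q")
    case True
    let ?I = "\<sigma> ` {p..<q}"
    have "?I \<subseteq> {..<k}" using \<sigma>k assms True by auto
    moreover have "int (lsum ?I) = int (psum \<sigma> q) - int (psum \<sigma> p)"
      using lsum_image_interval[OF \<sigma> True] by linarith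
    ultimately show ?thesis
      using edge_weight_eq[OF assms(5)] diff set_weight_image_interval[OF \<sigma> True] by simp
  next
    case False
    let ?J = "\<sigma> ` {q..<p}"
    have J: "?J \<subseteq> {..<k}" using \<sigma>k assms False by auto
    then have "lsum ({..<k} - ?J) + lsum ?J = n"
      using lsum_all unfolding lsum_def by (metis finite_lessThan sum.subset_diff)
    then have "int (lsum ({..<k} - ?J)) = (int (psum \<sigma> q) - int (psum \<sigma> p)) + int n"
      using lsum_image_interval[OF \<sigma>, of q p] False by linarith
    then have "int (lsum ({..<k} - ?J)) mod int n = (int (psum \<sigma> q) - int (psum \<sigma> p)) mod int n"
      by simp
    then have "edge_weight i ((x + psum \<sigma> p) mod n) ((x + psum \<sigma> q) mod n) = - set_weight i ?J"
      using edge_weight_eq[OF assms(5), of "{..<k} - ?J"] diff set_weight_complement[OF assms(5) J] by simp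
    then show ?thesis using set_weight_image_interval[OF \<sigma>, of q p] False by simp
  qed
qed

lemma edge_weight_cocycle:
  assumes "{a, b, c} \<in> T" "i < k"
  shows "edge_weight i b c - edge_weight i a c + edge_weight i a b = 0"
proof -
  obtain x \<sigma> where x: "x < n" and \<sigma>: "\<sigma> permutes {..<k}" and abc: "{a, b, c} \<subseteq> Delta n L x \<sigma>"
    using assms(1) unfolding tonnetz_eq by blast
  obtain p q r where "p < k" "a = (x + psum \<sigma> p) mod n" "q < k" "b = (x + psum \<sigma> q) mod n"
    "r < k" "c = (x + psum \<sigma> r) mod n"
    using abc unfolding Delta_eq by auto
  then show ?thesis using edge_weight_Delta[OF x \<sigma> _ _ assms(2)] by simp
qed

lemma pairing_homologous:
  assumes "homologous n T z z'" "i < k"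
  shows "pairing i z = pairing i z'"
proof -
  obtain c where c: "chain2 T c" "\<forall>e. z e - z' e = bd2 n c e"
    using assms(1) unfolding homologous_def by blast
  have "pairing i z - pairing i z' = (\<Sum>a<n. \<Sum>b<n. bd2 n c (a, b) * edge_weight i a b)"
    unfolding pairing_def using c(2) by (simp add: sum_subtractf left_diff_distrib flip: c(2)[rule_format])
  also have "\<dots> = 0"
    using cocycle_pairing_boundary[OF c(1)] edge_weight_cocycle[OF _ assms(2)] by blast
  finally show ?thesis by simp
qed

lemma pairing_edge_add:
  assumes "a < n" "b < n"
  shows "pairing i (\<lambda>e. (if e = (a, b) then 1 else 0) + z e) = edge_weight i a b + pairing i z"
proof -
  have "pairing i (\<lambda>e. (if e = (a, b) then 1 else 0) + z e) =
      (\<Sum>x<n. \<Sum>y<n. (if (x, y) = (a, b) then 1 else 0) * edge_weight i x y) + pairing i z"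
    unfolding pairing_def by (simp add: distrib_right sum.distrib)
  also have "(\<Sum>x<n. \<Sum>y<n. (if (x, y) = (a, b) then 1 else 0) * edge_weight i x y) =
      (\<Sum>x<n. \<Sum>y<n. if (x, y) = (a, b) then edge_weight i x y else 0)"
    by (intro sum.cong) auto
  finally show ?thesis using assms by (simp only: sum_pairs_indicator) simp
qed

lemma pairing_walk:
  assumes "v < n" "set ts \<subseteq> {..<k}" "i < k"
  shows "pairing i (path_chain (walk n L v ts)) = int (count_list ts i) - int (count_list ts 0)"
  using assms(1,2)
proof (induction ts arbitrary: v)
  case Nil then show ?case by (simp add: pairing_def)
next
  case (Cons t ts)
  let ?w = "(v + L!t) mod n"
  obtain R where R: "walk n L ?w ts = ?w # R" by (cases ts) auto
  have w: "?w < n" using n_pos by simp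
  have "edge_weight i v ?w = set_weight i {t}"
  proof (rule edge_weight_eq[OF assms(3)])
    show "{t} \<subseteq> {..<k}" using Cons.prems by simp
    show "int (lsum {t}) mod int n = (int ?w - int v) mod int n"
      using int_mod_diff_add_mod[of v "L!t" n 0] Cons.prems(1) by (simp add: lsum_def)
  qed
  moreover have "path_chain (walk n L v (t # ts)) = (\<lambda>e. (if e = (v, ?w) then 1 else 0) + path_chain (walk n L ?w ts) e)"
    using R by (simp add: path_chain_Cons_Cons fun_eq_iff)
  ultimately show ?case
    using Cons w pairing_edge_add[OF Cons.prems(1) w] unfolding set_weight_def by auto
qed

lemma pairing_E_path:
  assumes "v < n" "i < k"
  shows "pairing i (path_chain (E_path n L v ps)) = int (ps!i) - int (ps!0)"
  using pairing_walk[OF assms(1) set_block_list assms(2)] assms two_le_k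
  by (simp add: E_path_eq_walk_block_list length_L count_list_block_list)

lemma homologous_E_path_imp_shift:
  assumes "v < n" "homologous n T (path_chain (E_path n L v ps)) (path_chain (E_path n L v qs))"
  shows "\<exists>m::int. \<forall>i<k. int (ps!i) - int (qs!i) = m"
proof (intro exI allI impI)
  fix i assume "i < k"
  then have "int (ps!i) - int (ps!0) = int (qs!i) - int (qs!0)"
    using pairing_homologous[OF assms(2)] pairing_E_path[OF assms(1)] by metis
  then show "int (ps!i) - int (qs!i) = int (ps!0) - int (qs!0)" by simp
qed

lemma homologous_E_path_iff:
  assumes "v < n" "admissible n L ps" "admissible n L qs"
  shows "homologous n T (path_chain (E_path n L v ps)) (path_chain (E_path n L v qs)) \<longleftrightarrow>
    (\<exists>m::int. \<forall>i<k. int (ps!i) - int (qs!i) = m)"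
  using homologous_E_path_imp_shift[OF assms(1)] homologous_E_path_if_shift[OF assms] by blast

end

theorem proposition4p1:
  fixes L :: "nat list" and n k v0 :: nat
  assumes "k \<ge> 2" and "length L = k" and "\<forall>i<k. L!i > 0"
    and "generic L" and "reduced L" and "n = sum_list L" and "v0 < n"
  shows "(\<forall>p. closed_edge_path (tonnetz n L) v0 p \<longrightarrow>
            (\<exists>ps. admissible n L ps \<and> edge_homotopic (tonnetz n L) p (E_path n L v0 ps)))
       \<and> (\<forall>z. cycle1 n (tonnetz n L) z \<longrightarrow>
            (\<exists>ps. admissible n L ps \<and> homologous n (tonnetz n L) z (path_chain (E_path n L v0 ps))))
       \<and> (\<forall>ps ps'. admissible n L ps \<longrightarrow> admissible n L ps' \<longrightarrow>
            (homologous n (tonnetz n L) (path_chain (E_path n L v0 ps)) (path_chain (E_path n L v0 ps'))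
             \<longleftrightarrow> (\<exists>m::int. \<forall>i<k. int (ps!i) - int (ps'!i) = m)))"
proof -
  interpret generic_tonnetz n L k
    using assms by unfold_locales auto
  show ?thesis
    using closed_edge_path_homotopic_E_path[OF assms(7)] cycle_represented[OF assms(5,7)]
      homologous_E_path_iff[OF assms(7)]
    unfolding represented_def by blast
qed

end
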